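(* In the setting below, for any integers $1\le i_1<\cdots<i_k\le n$ (with $1\le k\le n$), $$\mathrm{grp}(S\cap F_{i_1}\cap\cdots\cap F_{i_k}\cap F_\sigma)=\mathrm{grp}(S)\cap H_{i_1}\cap\cdots\cap H_{i_k}\cap H_\sigma.$$
   Context: Let $K$ be a field, $n\ge1$, $\lambda=(\lambda_1,\ldots,\lambda_n)$ positive integers, $L=\mathrm{lcm}(\lambda_1,\ldots,\lambda_n)$, $\omega_i=L/\lambda_i$, $\omega=(\omega_1,\ldots,\omega_n)$. Let $S\subseteq\mathbb{N}^{n+1}$ be the semigroup generated by $(\mathbf{e}_i,0)$ ($i=1,\ldots,n$) and $(\beta,1)$ for all $\beta\in\mathbb{N}^n$ with $\omega\cdot\beta\ge L$ (this is the semigroup with $K[S]\cong R[It]$, the Rees algebra of the integral closure $I$ of $(x_1^{\lambda_1},\ldots,x_n^{\lambda_n})$ in $R=K[x_1,\ldots,x_n]$); $\mathrm{grp}(S)=\mathbb{Z}^{n+1}$. $\mathrm{pos}(S)$ is the cone of nonnegative real combinations of elements of $S$. $H_i$ is the $i$-th coordinate hyperplane of $\mathbb{R}^{n+1}$, $F_i=\mathrm{pos}(S)\cap H_i$, $H_\sigma=\{\sigma=0\}$ with $\sigma(\alpha,a_{n+1})=\omega\cdot\alpha-La_{n+1}$, and $F_\sigma=\mathrm{pos}(S)\cap H_\sigma$. *)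

theory Defs
  imports Complex_Main
begin

text \<open>Vectors of Z^(n+1) are modelled as functions nat => int whose coordinates
  are indexed by 1..n+1 (coordinate n+1 is the last one, a_(n+1)); all other
  coordinates are 0.  Real vectors of R^(n+1) likewise as nat => real.\<close>

definition Lval :: "nat \<Rightarrow> (nat \<Rightarrow> nat) \<Rightarrow> nat" where
  "Lval n lam = Lcm (lam ` {1..n})"

definition omega :: "nat \<Rightarrow> (nat \<Rightarrow> nat) \<Rightarrow> nat \<Rightarrow> nat" where
  "omega n lam i = Lval n lam div lam i"

definition unitv :: "nat \<Rightarrow> nat \<Rightarrow> int" where
  "unitv i = (\<lambda>j. if j = i then 1 else 0)"

definition gens :: "nat \<Rightarrow> (nat \<Rightarrow> nat) \<Rightarrow> (nat \<Rightarrow> int) set" where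
  "gens n lam = unitv ` {1..n} \<union>
     {v. v (n+1) = 1 \<and> (\<forall>j\<in>{1..n}. v j \<ge> 0) \<and> (\<forall>j. j \<notin> {1..n+1} \<longrightarrow> v j = 0)
         \<and> (\<Sum>j=1..n. int (omega n lam j) * v j) \<ge> int (Lval n lam)}"

inductive_set semigroup_gen :: "(nat \<Rightarrow> int) set \<Rightarrow> (nat \<Rightarrow> int) set" for G where
  zero: "(\<lambda>_. 0) \<in> semigroup_gen G"
| gen: "g \<in> G \<Longrightarrow> g \<in> semigroup_gen G"
| add: "x \<in> semigroup_gen G \<Longrightarrow> y \<in> semigroup_gen G \<Longrightarrow> (\<lambda>j. x j + y j) \<in> semigroup_gen G"

definition Ssg :: "nat \<Rightarrow> (nat \<Rightarrow> nat) \<Rightarrow> (nat \<Rightarrow> int) set" where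
  "Ssg n lam = semigroup_gen (gens n lam)"

inductive_set grp :: "(nat \<Rightarrow> int) set \<Rightarrow> (nat \<Rightarrow> int) set" for T where
  zero: "(\<lambda>_. 0) \<in> grp T"
| gen: "t \<in> T \<Longrightarrow> t \<in> grp T"
| add: "x \<in> grp T \<Longrightarrow> y \<in> grp T \<Longrightarrow> (\<lambda>j. x j + y j) \<in> grp T"
| neg: "x \<in> grp T \<Longrightarrow> (\<lambda>j. - x j) \<in> grp T"

definition emb :: "(nat \<Rightarrow> int) \<Rightarrow> (nat \<Rightarrow> real)" where
  "emb v = (\<lambda>j. real_of_int (v j))"

definition pos :: "(nat \<Rightarrow> int) set \<Rightarrow> (nat \<Rightarrow> real) set" where
  "pos T = {x. \<exists>A c. finite A \<and> A \<subseteq> T \<and> (\<forall>a\<in>A. c a \<ge> (0::real)) \<and>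
                    x = (\<lambda>j. \<Sum>a\<in>A. c a * real_of_int (a j))}"

definition Hcoord :: "nat \<Rightarrow> (nat \<Rightarrow> real) set" where
  "Hcoord i = {x. x i = 0}"

definition sigma :: "nat \<Rightarrow> (nat \<Rightarrow> nat) \<Rightarrow> (nat \<Rightarrow> real) \<Rightarrow> real" where
  "sigma n lam x = (\<Sum>j=1..n. real (omega n lam j) * x j) - real (Lval n lam) * x (n+1)"

definition Hsigma :: "nat \<Rightarrow> (nat \<Rightarrow> nat) \<Rightarrow> (nat \<Rightarrow> real) set" where
  "Hsigma n lam = {x. sigma n lam x = 0}"

definition Fcoord :: "nat \<Rightarrow> (nat \<Rightarrow> nat) \<Rightarrow> nat \<Rightarrow> (nat \<Rightarrow> real) set" where
  "Fcoord n lam i = pos (Ssg n lam) \<inter> Hcoord i"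

definition Fsigma :: "nat \<Rightarrow> (nat \<Rightarrow> nat) \<Rightarrow> (nat \<Rightarrow> real) set" where
  "Fsigma n lam = pos (Ssg n lam) \<inter> Hsigma n lam"

end

theory Submission
  imports Defs "HOL-Computational_Algebra.Computational_Algebra"
begin

(* Let T = S \<inter> F_I \<inter> F_\<sigma>, i.e. (since every element of S lies in pos S)
   the elements s of S with s_i = 0 for i \<in> I and \<sigma>(s) = 0.  The inclusion
   grp T \<subseteq> grp S \<inter> H_I \<inter> H_\<sigma> holds because the right side is a subgroup containing T.
   For the converse put J = {1..n} - I and w_j = \<omega>_j.  A vector v of the right side is
   supported on J \<union> {n+1} with \<Sum> w_j v_j = L v_(n+1).  T contains the generators
     E_m = \<lambda>_m e_m + e_(n+1)                                       (m \<in> J),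
     B_jm = (l_jm/w_j) e_j + ((L - l_jm)/w_m) e_m + e_(n+1)          (j \<noteq> m in J),
   with l_jm = lcm(w_j, w_m), hence also D_jm = B_jm - E_m = (l_jm/w_j) e_j - (l_jm/w_m) e_m.
   Coordinates of v in J are killed one at a time: if v is supported on {m} \<union> A \<union> {n+1},
   then w_m (v_m - v_(n+1) \<lambda>_m) = -\<Sum>_(j\<in>A) w_j v_j, and an elementary divisibility
   lemma writes v_m - v_(n+1) \<lambda>_m as an integer combination of the l_jm/w_m, so a suitable
   element of grp T removes the m-th coordinate.  Once no coordinate of J is left,
   \<sigma>(v) = 0 forces v = 0.
   The file first proves the closure properties of grp and the divisibility lemma, then
   develops the argument in a locale fixing n and \<lambda>, and derives the theorem at the end. *)

section \<open>The subgroup generated by a set of integer vectors\<close>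

lemma grp_least:
  assumes "(\<lambda>_. 0) \<in> G" "\<And>x y. x \<in> G \<Longrightarrow> y \<in> G \<Longrightarrow> (\<lambda>j. x j + y j) \<in> G"
    "\<And>x. x \<in> G \<Longrightarrow> (\<lambda>j. - x j) \<in> G" "T \<subseteq> G"
  shows "grp T \<subseteq> G"
proof
  fix x assume "x \<in> grp T"
  then show "x \<in> G" by (induction rule: grp.induct) (use assms in auto)
qed

lemma grp_diff: "x \<in> grp T \<Longrightarrow> y \<in> grp T \<Longrightarrow> (\<lambda>j. x j - y j) \<in> grp T"
  using grp.add[OF _ grp.neg] by fastforce

lemma grp_smult_nat: "x \<in> grp T \<Longrightarrow> (\<lambda>j. int k * x j) \<in> grp T"
proof (induction k)
  case 0
  then show ?case using grp.zero by simp
next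
  case (Suc k)
  then have "(\<lambda>j. (\<lambda>j. int k * x j) j + x j) \<in> grp T" by (intro grp.add)
  then show ?case by (simp add: algebra_simps)
qed

lemma grp_smult: "x \<in> grp T \<Longrightarrow> (\<lambda>j. k * x j) \<in> grp T"
proof (cases "k \<ge> 0")
  case True
  assume "x \<in> grp T"
  then have "(\<lambda>j. int (nat k) * x j) \<in> grp T" by (rule grp_smult_nat)
  then show ?thesis using True by simp
next
  case False
  assume "x \<in> grp T"
  then have "(\<lambda>j. - (\<lambda>j. int (nat (-k)) * x j) j) \<in> grp T" by (intro grp.neg grp_smult_nat)
  then show ?thesis using False by simp
qed

lemma grp_sum: "finite A \<Longrightarrow> (\<And>a. a \<in> A \<Longrightarrow> f a \<in> grp T) \<Longrightarrow> (\<lambda>j. \<Sum>a\<in>A. f a j) \<in> grp T"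
proof (induction A rule: finite_induct)
  case empty
  then show ?case using grp.zero by simp
next
  case (insert a A)
  then have "(\<lambda>j. f a j + (\<lambda>j. \<Sum>a\<in>A. f a j) j) \<in> grp T" by (intro grp.add) auto
  then show ?case using insert.hyps by simp
qed

lemma grp_coord_zero: "x \<in> grp T \<Longrightarrow> (\<And>t. t \<in> T \<Longrightarrow> t j = 0) \<Longrightarrow> x j = 0"
  by (induction rule: grp.induct) auto

section \<open>An elementary divisibility lemma\<close>

text \<open>If lcm(gcd of the w_j, m) divides m x, then x is an integer combination of the
  numbers lcm(w_j, m)/m.  Induction on the index set, using Bezout for the new index.\<close>
lemma lcm_Gcd_dvd_imp_combination:
  fixes w :: "nat \<Rightarrow> int"
  assumes "finite A" "\<forall>j\<in>A. w j > 0" "m > 0" "lcm (Gcd (w ` A)) m dvd m * x"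
  shows "\<exists>c. x = (\<Sum>j\<in>A. c j * (lcm (w j) m div m))"
  using assms
proof (induction A arbitrary: x rule: finite_induct)
  case empty
  then show ?case by simp
next
  case (insert a A)
  define P where "P = lcm (w a) m"
  define Q where "Q = lcm (Gcd (w ` A)) m"
  have "lcm (Gcd (w ` insert a A)) m = gcd P Q"
    unfolding P_def Q_def by (simp add: lcm.commute[of _ m] lcm_gcd_distrib)
  with insert.prems(3) obtain k where k: "m * x = gcd P Q * k" by (metis dvdE)
  obtain u v where uv: "u * P + v * Q = gcd P Q" using bezout_int by blast
  obtain q where q: "Q = m * q" unfolding Q_def by (meson dvd_lcm2 dvdE)
  obtain l where l: "P = m * l" unfolding P_def by (meson dvd_lcm2 dvdE)
  have l_eq: "l = lcm (w a) m div m" using l insert.prems P_def by simp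
  have "m * x = k * (u * P + v * Q)" using k uv by simp
  also have "\<dots> = m * (k*u*l + k*v*q)" using q l by (simp add: algebra_simps)
  finally have x: "x = k*u*l + k*v*q" using insert.prems by simp
  have "lcm (Gcd (w ` A)) m dvd m * (k*v*q)"
    using q unfolding Q_def by (simp add: algebra_simps)
  then obtain c where c: "k*v*q = (\<Sum>j\<in>A. c j * (lcm (w j) m div m))"
    using insert.IH insert.prems by auto
  define c' where "c' = c(a := k*u)"
  have "(\<Sum>j\<in>insert a A. c' j * (lcm (w j) m div m))
        = k*u*l + (\<Sum>j\<in>A. c' j * (lcm (w j) m div m))"
    using insert.hyps by (simp add: c'_def l_eq)
  also have "(\<Sum>j\<in>A. c' j * (lcm (w j) m div m)) = (\<Sum>j\<in>A. c j * (lcm (w j) m div m))"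
    using insert.hyps by (intro sum.cong) (auto simp: c'_def)
  finally show ?case using x c by metis
qed

lemma weighted_sum_imp_lcm_combination:
  fixes w :: "nat \<Rightarrow> int"
  assumes "finite A" "\<forall>j\<in>A. w j > 0" "m > 0" "m * x = (\<Sum>j\<in>A. w j * y j)"
  shows "\<exists>c. x = (\<Sum>j\<in>A. c j * (lcm (w j) m div m))"
proof -
  have "Gcd (w ` A) dvd m * x" unfolding assms(4)
    by (intro dvd_sum) (simp add: Gcd_dvd)
  then have "lcm (Gcd (w ` A)) m dvd m * x" by simp
  then show ?thesis using lcm_Gcd_dvd_imp_combination assms by blast
qed

section \<open>The face of the Rees semigroup cut out by I and \<sigma>\<close>

locale rees_data =
  fixes n :: nat and lam :: "nat \<Rightarrow> nat"
  assumes lam_pos: "\<forall>i\<in>{1..n}. lam i > 0"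
begin

definition L :: int where "L = int (Lval n lam)"
definition w :: "nat \<Rightarrow> int" where "w j = int (omega n lam j)"
definition sig :: "(nat \<Rightarrow> int) \<Rightarrow> int" where
  "sig v = (\<Sum>j=1..n. w j * v j) - L * v (n+1)"

lemma L_pos: "L > 0"
proof -
  have "0 \<notin> lam ` {1..n}" using lam_pos by auto
  then have "Lcm (lam ` {1..n}) \<noteq> 0" using Lcm_0_iff_nat[of "lam ` {1..n}"] by blast
  then show ?thesis unfolding L_def Lval_def by (metis of_nat_0_less_iff not_gr_zero)
qed

lemma w_times_lam: "j \<in> {1..n} \<Longrightarrow> w j * int (lam j) = L"
proof -
  assume j: "j \<in> {1..n}"
  have "lam j dvd Lval n lam" unfolding Lval_def using j by (intro dvd_Lcm) auto
  then have "omega n lam j * lam j = Lval n lam" unfolding omega_def by simp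
  then show ?thesis unfolding w_def L_def by (metis of_nat_mult)
qed

lemma w_pos: "j \<in> {1..n} \<Longrightarrow> w j > 0"
proof -
  assume j: "j \<in> {1..n}"
  then have "w j * int (lam j) > 0" "int (lam j) > 0"
    using w_times_lam L_pos lam_pos by auto
  then show ?thesis using zero_less_mult_pos2 by blast
qed

lemma w_dvd_L: "j \<in> {1..n} \<Longrightarrow> w j dvd L"
  using w_times_lam by (metis dvd_triv_left)

lemma sigma_emb: "sigma n lam (emb v) = real_of_int (sig v)"
  by (simp add: sigma_def emb_def sig_def w_def L_def)

lemma sig_zero: "sig (\<lambda>_. 0) = 0"
  by (simp add: sig_def)

lemma sig_add: "sig (\<lambda>j. x j + y j) = sig x + sig y"
  by (simp add: sig_def sum.distrib algebra_simps)

lemma sig_neg: "sig (\<lambda>j. - x j) = - sig x"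
  by (simp add: sig_def sum_negf algebra_simps)

lemma sig_supported:
  assumes "A \<subseteq> {1..n}" "\<forall>j. j \<notin> insert (n+1) A \<longrightarrow> v j = 0"
  shows "sig v = (\<Sum>j\<in>A. w j * v j) - L * v (n+1)"
proof -
  have "(\<Sum>j=1..n. w j * v j) = (\<Sum>j\<in>A. w j * v j)"
    using assms by (intro sum.mono_neutral_right) auto
  then show ?thesis unfolding sig_def by simp
qed

text \<open>The face S \<inter> F_I \<inter> F_\<sigma>, described by linear equations on S; face_eq below shows
  that this is the set in the theorem.\<close>
definition face :: "nat set \<Rightarrow> (nat \<Rightarrow> int) set" where
  "face I = {s \<in> Ssg n lam. (\<forall>i\<in>I. s i = 0) \<and> sig s = 0}"

text \<open>Every element of T lies in the cone pos T, so the condition "in pos S" of the faces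
  is automatic for elements of S.\<close>
lemma emb_in_pos: "s \<in> T \<Longrightarrow> emb s \<in> pos T"
  unfolding pos_def
  by (intro CollectI exI[of _ "{s}"] exI[of _ "\<lambda>_. 1"]) (auto simp: emb_def)

lemma face_eq:
  assumes "I \<noteq> {}"
  shows "{s \<in> Ssg n lam. emb s \<in> (\<Inter>i\<in>I. Fcoord n lam i) \<inter> Fsigma n lam} = face I"
  using assms emb_in_pos
  by (auto simp: face_def Fcoord_def Fsigma_def Hcoord_def Hsigma_def sigma_emb)
     (auto simp: emb_def)

lemma Ssg_support: "x \<in> Ssg n lam \<Longrightarrow> j \<notin> {1..n+1} \<Longrightarrow> x j = 0"
  unfolding Ssg_def
  by (induction rule: semigroup_gen.induct) (auto simp: gens_def unitv_def)

text \<open>The easy inclusion: grp S \<inter> H_I \<inter> H_\<sigma> is a subgroup containing the face.\<close>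
lemma grp_face_subset:
  "grp (face I) \<subseteq> {v \<in> grp (Ssg n lam). (\<forall>i\<in>I. v i = 0) \<and> sig v = 0}"
  by (rule grp_least)
     (auto simp: face_def sig_zero sig_add sig_neg intro: grp.intros)

lemma gen_in_face:
  assumes "\<forall>j. j \<notin> {1..n+1} \<longrightarrow> s j = 0" "s (n+1) = 1" "\<forall>j\<in>{1..n}. s j \<ge> 0"
    "(\<Sum>j=1..n. w j * s j) = L" "\<forall>i\<in>I. s i = 0"
  shows "s \<in> face I"
proof -
  have "s \<in> gens n lam" unfolding gens_def using assms by (auto simp: w_def L_def)
  then have "s \<in> Ssg n lam" unfolding Ssg_def by (rule semigroup_gen.gen)
  then show ?thesis using assms by (simp add: face_def sig_def)
qed

definition E :: "nat \<Rightarrow> nat \<Rightarrow> int" where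
  "E m k = (if k = m then int (lam m) else if k = n+1 then 1 else 0)"

lemma E_in_face:
  assumes "m \<in> {1..n} - I" "n+1 \<notin> I"
  shows "E m \<in> face I"
proof (rule gen_in_face)
  have "(\<Sum>j=1..n. w j * E m j) = (\<Sum>j\<in>{m}. w j * E m j)"
    using assms by (intro sum.mono_neutral_right) (auto simp: E_def)
  then show "(\<Sum>j=1..n. w j * E m j) = L" using assms w_times_lam by (simp add: E_def)
qed (use assms in \<open>auto simp: E_def\<close>)

definition B :: "nat \<Rightarrow> nat \<Rightarrow> nat \<Rightarrow> int" where
  "B j m k = (if k = j then lcm (w j) (w m) div w j
              else if k = m then (L - lcm (w j) (w m)) div w m
              else if k = n+1 then 1 else 0)"

lemma B_in_face:
  assumes jm: "j \<in> {1..n} - I" "m \<in> {1..n} - I" "j \<noteq> m" and "n+1 \<notin> I"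
  shows "B j m \<in> face I"
proof (rule gen_in_face)
  define l where "l = lcm (w j) (w m)"
  have l_dvd_L: "l dvd L" unfolding l_def using w_dvd_L jm by (simp add: lcm_least)
  have l_pos: "l > 0" unfolding l_def using w_pos jm
    by (metis DiffD1 lcm_eq_0_iff lcm_ge_0_int less_le)
  have l_le_L: "l \<le> L" using l_dvd_L L_pos zdvd_imp_le by blast
  have wj: "w j * (l div w j) = l" unfolding l_def by simp
  have wm: "w m * ((L - l) div w m) = L - l"
    using w_dvd_L[of m] jm unfolding l_def by (intro dvd_mult_div_cancel dvd_diff) auto
  have "(\<Sum>k=1..n. w k * B j m k) = (\<Sum>k\<in>{j, m}. w k * B j m k)"
    using jm by (intro sum.mono_neutral_right) (auto simp: B_def)
  then show "(\<Sum>k=1..n. w k * B j m k) = L"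
    using jm wj wm by (simp add: B_def l_def)
  show "\<forall>k\<in>{1..n}. B j m k \<ge> 0"
    using l_pos l_le_L w_pos jm by (auto simp: B_def l_def pos_imp_zdiv_nonneg_iff)
qed (use assms in \<open>auto simp: B_def\<close>)

definition D :: "nat \<Rightarrow> nat \<Rightarrow> nat \<Rightarrow> int" where
  "D j m k = (if k = j then lcm (w j) (w m) div w j
              else if k = m then - (lcm (w j) (w m) div w m) else 0)"

lemma D_eq_B_minus_E:
  assumes "m \<in> {1..n}" "j \<in> {1..n}" "j \<noteq> m"
  shows "D j m = (\<lambda>k. B j m k - E m k)"
proof -
  have "int (lam m) = L div w m"
    using w_times_lam[OF assms(1)] w_pos[OF assms(1)] by (metis nonzero_mult_div_cancel_left less_irrefl)
  moreover have "w m dvd lcm (w j) (w m)" by simp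
  ultimately have "(L - lcm (w j) (w m)) div w m - int (lam m) = - (lcm (w j) (w m) div w m)"
    using w_dvd_L[OF assms(1)] by (simp add: div_diff)
  then show ?thesis using assms by (intro ext) (auto simp: D_def B_def E_def)
qed

lemma D_in_grp_face:
  assumes "j \<in> {1..n} - I" "m \<in> {1..n} - I" "j \<noteq> m" "n+1 \<notin> I"
  shows "D j m \<in> grp (face I)"
  using assms D_eq_B_minus_E grp_diff[OF grp.gen grp.gen] B_in_face E_in_face by simp

text \<open>Writing a = v_(n+1), we have
  w_m (v_m - a \<lambda>_m) = -\<Sum>_(j\<in>A) w_j v_j, so v_m - a \<lambda>_m = \<Sum> c_j l_jm/w_m, and
  g = -a E_m + \<Sum> c_j D_jm does the job.\<close>
lemma eliminate_coordinate:
  assumes A: "finite A" "A \<subseteq> {1..n} - I" and m: "m \<in> {1..n} - I" "m \<notin> A"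
    and I: "n+1 \<notin> I"
    and v: "\<forall>k. k \<notin> insert (n+1) (insert m A) \<longrightarrow> v k = 0" "sig v = 0"
  shows "\<exists>g \<in> grp (face I). \<forall>k. k \<notin> insert (n+1) A \<longrightarrow> v k + g k = 0"
proof -
  define a where "a = v (n+1)"
  define x where "x = v m - a * int (lam m)"
  have "sig v = w m * v m + (\<Sum>j\<in>A. w j * v j) - L * a"
    using sig_supported[of "insert m A" v] v A m by (auto simp: a_def)
  then have x_eq: "w m * x = (\<Sum>j\<in>A. w j * (- v j))"
    using v(2) w_times_lam m unfolding x_def by (simp add: sum_negf algebra_simps)
  have "\<forall>j\<in>A. w j > 0" "m \<in> {1..n}" using A m w_pos by auto
  then obtain c where c: "x = (\<Sum>j\<in>A. c j * (lcm (w j) (w m) div w m))"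
    using weighted_sum_imp_lcm_combination[OF A(1) _ w_pos x_eq] by blast
  define g where "g = (\<lambda>k. - a * E m k + (\<Sum>j\<in>A. c j * D j m k))"
  have "g \<in> grp (face I)"
    unfolding g_def
  proof (rule grp.add)
    show "(\<lambda>k. - a * E m k) \<in> grp (face I)"
      using E_in_face[OF m(1) I] by (intro grp_smult grp.gen)
    show "(\<lambda>k. \<Sum>j\<in>A. c j * D j m k) \<in> grp (face I)"
      using A m I by (intro grp_sum grp_smult D_in_grp_face) auto
  qed
  moreover have "v k + g k = 0" if k: "k \<notin> insert (n+1) A" for k
  proof (cases "k = m")
    case True
    have "(\<Sum>j\<in>A. c j * D j m m) = - (\<Sum>j\<in>A. c j * (lcm (w j) (w m) div w m))"
      using m by (auto simp: D_def sum_negf[symmetric] intro!: sum.cong)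
    then show ?thesis using True c by (simp add: g_def x_def a_def E_def)
  next
    case False
    have "(\<Sum>j\<in>A. c j * D j m k) = 0" using k False by (intro sum.neutral) (auto simp: D_def)
    then show ?thesis using False k v(1) by (simp add: g_def E_def)
  qed
  ultimately show ?thesis by blast
qed

lemma supported_in_grp_face:
  assumes "finite A" "A \<subseteq> {1..n} - I" "n+1 \<notin> I"
  shows "\<forall>k. k \<notin> insert (n+1) A \<longrightarrow> v k = 0 \<Longrightarrow> sig v = 0 \<Longrightarrow> v \<in> grp (face I)"
  using assms(1,2)
proof (induction A arbitrary: v rule: finite_induct)
  case empty
  then have "L * v (n+1) = 0" using sig_supported[of "{}" v] by simp
  then have "v = (\<lambda>_. 0)" using empty.prems(1) L_pos by (metis insert_iff empty_iff mult_eq_0_iff less_irrefl)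
  then show ?case by (simp add: grp.zero)
next
  case (insert m A)
  have "A \<subseteq> {1..n} - I" "m \<in> {1..n} - I" using insert.prems(3) by auto
  then obtain g where g: "g \<in> grp (face I)" "\<forall>k. k \<notin> insert (n+1) A \<longrightarrow> v k + g k = 0"
    using eliminate_coordinate[OF insert.hyps(1) _ _ insert.hyps(2) assms(3) insert.prems(1,2)]
    by blast
  have "sig g = 0" using grp_face_subset g(1) by blast
  then have "sig (\<lambda>k. v k + g k) = 0" using insert.prems(2) by (simp add: sig_add)
  then have "(\<lambda>k. v k + g k) \<in> grp (face I)" using insert g(2) by simp
  from grp_diff[OF this g(1)] show ?case by simp
qed

lemma grp_face_supset:
  assumes "n+1 \<notin> I"
  shows "{v \<in> grp (Ssg n lam). (\<forall>i\<in>I. v i = 0) \<and> sig v = 0} \<subseteq> grp (face I)"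
proof
  fix v assume v: "v \<in> {v \<in> grp (Ssg n lam). (\<forall>i\<in>I. v i = 0) \<and> sig v = 0}"
  have "v k = 0" if "k \<notin> insert (n+1) ({1..n} - I)" for k
  proof (cases "k \<in> I")
    case False
    then have "k \<notin> {1..n+1}" using that by auto
    then show ?thesis using v grp_coord_zero Ssg_support by blast
  qed (use v in auto)
  then show "v \<in> grp (face I)" using supported_in_grp_face[of "{1..n} - I"] v assms by auto
qed

lemma hyperplanes_eq:
  assumes "I \<noteq> {}"
  shows "{v \<in> grp (Ssg n lam). emb v \<in> (\<Inter>i\<in>I. Hcoord i) \<inter> Hsigma n lam}
       = {v \<in> grp (Ssg n lam). (\<forall>i\<in>I. v i = 0) \<and> sig v = 0}"
  using assms by (auto simp: Hcoord_def Hsigma_def sigma_emb) (auto simp: emb_def)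

end

theorem mainTheorem12:
  fixes n :: nat and lam :: "nat \<Rightarrow> nat" and I :: "nat set"
  assumes "n \<ge> 1"
    and "\<forall>i\<in>{1..n}. lam i > 0"
    and "I \<subseteq> {1..n}" and "I \<noteq> {}"
  shows "grp {s \<in> Ssg n lam. emb s \<in> (\<Inter>i\<in>I. Fcoord n lam i) \<inter> Fsigma n lam}
       = {v \<in> grp (Ssg n lam). emb v \<in> (\<Inter>i\<in>I. Hcoord i) \<inter> Hsigma n lam}"
proof -
  interpret rees_data n lam using assms(2) by unfold_locales
  have "n+1 \<notin> I" using assms(3) by auto
  then have "grp (face I) = {v \<in> grp (Ssg n lam). (\<forall>i\<in>I. v i = 0) \<and> sig v = 0}"
    using grp_face_subset grp_face_supset by blast
  then show ?thesis using face_eq[OF assms(4)] hyperplanes_eq[OF assms(4)] by simp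
qed

end
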